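(* Let \(\mathcal{F}\) be a set of increasing and amenable functions \(f\colon[0,\infty)\to[0,\infty)\). (a) If \(\mathcal{F}\) is \(2\)-separating, then for every metric space \((X,d)\) the following are equivalent: (i) \(f\circ d\) is a metric on \(X\) for every \(f\in\mathcal{F}\); (ii) \(d\) is an ultrametric on \(X\). (b) If \(\mathcal{F}\) is not \(2\)-separating, then there is a metric space \((X,d)\) such that \(f\circ d\) is a metric on \(X\) for every \(f\in\mathcal{F}\), but \(d\) is not an ultrametric on \(X\).
   Context: A function \(f\colon[0,\infty)\to[0,\infty)\) is amenable if \(f^{-1}(\{0\})=\{0\}\), and increasing if \(a\ge b\) implies \(f(a)\ge f(b)\). For \(k\in(1,\infty)\), a set \(\mathcal{F}\) of increasing amenable functions \([0,\infty)\to[0,\infty)\) is \(k\)-separating if for all \(t_1,t_2\in[0,\infty)\) with \(t_1<t_2\) there is \(f\in\mathcal{F}\) with \(k f(t_1)<f(t_2)\). A metric \(d\) is an ultrametric if \(d(x,y)\le\max\{d(x,z),d(z,y)\}\) for all \(x,y,z\). *)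

theory Defs
  imports "HOL-Analysis.Abstract_Metric_Spaces"
begin

text \<open>Functions [0,\<infinity>) \<rightarrow> [0,\<infinity>) are represented as real \<Rightarrow> real; only their
  values on [0,\<infinity>) matter, and we require that they map [0,\<infinity>) into [0,\<infinity>).\<close>

definition nonneg_fn :: "(real \<Rightarrow> real) \<Rightarrow> bool" where
  "nonneg_fn f \<longleftrightarrow> (\<forall>t\<ge>0. f t \<ge> 0)"

definition amenable :: "(real \<Rightarrow> real) \<Rightarrow> bool" where
  "amenable f \<longleftrightarrow> (\<forall>t\<ge>0. f t = 0 \<longleftrightarrow> t = 0)"

definition increasing_fn :: "(real \<Rightarrow> real) \<Rightarrow> bool" where
  "increasing_fn f \<longleftrightarrow> (\<forall>a b. 0 \<le> b \<and> b \<le> a \<longrightarrow> f b \<le> f a)"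

definition k_separating :: "real \<Rightarrow> (real \<Rightarrow> real) set \<Rightarrow> bool" where
  "k_separating k F \<longleftrightarrow>
     (\<forall>f\<in>F. nonneg_fn f \<and> increasing_fn f \<and> amenable f) \<and>
     (\<forall>t1 t2. 0 \<le> t1 \<and> t1 < t2 \<longrightarrow> (\<exists>f\<in>F. k * f t1 < f t2))"

definition ultrametric_on :: "'a set \<Rightarrow> ('a \<Rightarrow> 'a \<Rightarrow> real) \<Rightarrow> bool" where
  "ultrametric_on X d \<longleftrightarrow> Metric_space X d \<and>
     (\<forall>x\<in>X. \<forall>y\<in>X. \<forall>z\<in>X. d x y \<le> max (d x z) (d z y))"

end

theory Submission
  imports Defs
begin

text \<open>If \<open>d\<close> is an ultrametric, then \<open>f (d x z) \<le> f (max (d x y) (d y z)) \<le> f (d x y) + f (d y z)\<close>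
  for increasing nonnegative \<open>f\<close>. Conversely, if \<open>d x y > max (d x z) (d z y)\<close>, a \<open>2\<close>-separating
  family contains an \<open>f\<close> with \<open>2 f (max (d x z) (d z y)) < f (d x y)\<close>, which breaks the triangle
  inequality for \<open>f \<circ> d\<close>. If \<open>F\<close> is not \<open>2\<close>-separating, there are \<open>0 < s < u \<le> 2 s\<close> with
  \<open>f u \<le> 2 f s\<close> for all \<open>f \<in> F\<close>, and the isosceles triangle with sides \<open>s, s, u\<close> is a metric
  space on which every \<open>f \<circ> d\<close> is again such a triangle, but which is not ultrametric.\<close>

lemma Metric_space_comp_ultrametric:
  assumes "ultrametric_on X d" "nonneg_fn f" "increasing_fn f" "amenable f"
  shows "Metric_space X (\<lambda>x y. f (d x y))"
proof
  interpret M: Metric_space X d using assms(1) by (simp add: ultrametric_on_def)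
  show "0 \<le> f (d x y)" for x y using assms(2) M.nonneg unfolding nonneg_fn_def by blast
  show "f (d x y) = f (d y x)" for x y using M.commute by simp
  show "f (d x y) = 0 \<longleftrightarrow> x = y" if "x \<in> X" "y \<in> X" for x y
    using assms(4) M.nonneg[of x y] M.zero[OF that] unfolding amenable_def by blast
  show "f (d x z) \<le> f (d x y) + f (d y z)" if "x \<in> X" "y \<in> X" "z \<in> X" for x y z
  proof -
    have "d x z \<le> max (d x y) (d y z)" using assms(1) that by (simp add: ultrametric_on_def)
    hence "f (d x z) \<le> f (max (d x y) (d y z))"
      using assms(3) M.nonneg[of x z] unfolding increasing_fn_def by blast
    moreover have "f (d x y) \<ge> 0" "f (d y z) \<ge> 0"
      using assms(2) M.nonneg unfolding nonneg_fn_def by auto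
    ultimately show ?thesis by (simp add: max_def split: if_splits)
  qed
qed

lemma ultrametric_on_if_separating:
  assumes "Metric_space X d" "k_separating 2 F" "\<forall>f\<in>F. Metric_space X (\<lambda>x y. f (d x y))"
  shows "ultrametric_on X d"
  unfolding ultrametric_on_def
proof (intro conjI assms(1) ballI)
  interpret M: Metric_space X d by fact
  fix x y z assume xyz: "x \<in> X" "y \<in> X" "z \<in> X"
  let ?m = "max (d x z) (d z y)"
  show "d x y \<le> ?m"
  proof (rule ccontr)
    assume "\<not> d x y \<le> ?m"
    moreover have "0 \<le> ?m" by (simp add: le_max_iff_disj)
    ultimately obtain f where f: "f \<in> F" "2 * f ?m < f (d x y)"
      using assms(2) unfolding k_separating_def by (meson not_le)
    have "increasing_fn f" using assms(2) f(1) unfolding k_separating_def by blast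
    hence "f (d x z) \<le> f ?m" "f (d z y) \<le> f ?m"
      using M.nonneg unfolding increasing_fn_def by auto
    moreover interpret N: Metric_space X "\<lambda>x y. f (d x y)" using assms(3) f(1) by blast
    have "f (d x y) \<le> f (d x z) + f (d z y)" using N.triangle xyz by blast
    ultimately show False using f(2) by linarith
  qed
qed

lemma not_separating_obtains:
  assumes "\<forall>f\<in>F. nonneg_fn f \<and> increasing_fn f \<and> amenable f" "\<not> k_separating k F" "1 < k"
  obtains s u where "0 < s" "s < u" "u \<le> k * s" "\<forall>f\<in>F. f u \<le> k * f s"
proof (cases "F = {}")
  case True
  then show ?thesis using that[of 1 k] assms(3) by simp
next
  case False
  then obtain g where g: "g \<in> F" by blast
  obtain t1 t2 where t: "0 \<le> t1" "t1 < t2" "\<forall>f\<in>F. f t2 \<le> k * f t1"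
    using assms(1,2) unfolding k_separating_def by (auto simp: not_less)
  have "t1 \<noteq> 0"
  proof
    assume "t1 = 0"
    \<comment> \<open>then \<open>0 < g t2 \<le> k * g 0 = 0\<close>\<close>
    moreover have "g 0 = 0" "g t2 \<noteq> 0" "g t2 \<ge> 0"
      using assms(1) g t unfolding amenable_def nonneg_fn_def by auto
    ultimately show False using t(3) g by force
  qed
  with t(1) have t1: "0 < t1" by simp
  let ?u = "min t2 (k * t1)"
  have "f ?u \<le> k * f t1" if f: "f \<in> F" for f
  proof -
    have "increasing_fn f" using assms(1) f by blast
    moreover have "0 \<le> ?u" "?u \<le> t2" using t1 t assms(3) by auto
    ultimately have "f ?u \<le> f t2" unfolding increasing_fn_def by blast
    with t(3) f show ?thesis by fastforce
  qed
  moreover have "t1 < ?u" using t1 t(2) assms(3) by simp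
  ultimately show ?thesis using that[of t1 ?u] t1 by simp
qed

definition isosceles_dist :: "real \<Rightarrow> real \<Rightarrow> real \<Rightarrow> real \<Rightarrow> real" where
  "isosceles_dist a b x y = (if x = y then 0 else if \<bar>x - y\<bar> = 2 then a else b)"

lemma Metric_space_isosceles_dist:
  assumes "0 < a" "0 < b" "a \<le> 2 * b"
  shows "Metric_space {0,1,2} (isosceles_dist a b)"
proof
  show "0 \<le> isosceles_dist a b x y" for x y using assms by (simp add: isosceles_dist_def)
  show "isosceles_dist a b x y = isosceles_dist a b y x" for x y
    by (simp add: isosceles_dist_def abs_minus_commute)
  show "isosceles_dist a b x y = 0 \<longleftrightarrow> x = y" for x y using assms by (simp add: isosceles_dist_def)
  show "isosceles_dist a b x z \<le> isosceles_dist a b x y + isosceles_dist a b y z"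
    if "x \<in> {0,1,2}" "y \<in> {0,1,2}" "z \<in> {0,1,2}" for x y z
    using that assms by (auto simp: isosceles_dist_def)
qed

lemma comp_isosceles_dist:
  "f 0 = 0 \<Longrightarrow> (\<lambda>x y. f (isosceles_dist a b x y)) = isosceles_dist (f a) (f b)"
  by (auto simp: isosceles_dist_def fun_eq_iff)

lemma not_ultrametric_on_isosceles_dist:
  assumes "b < a"
  shows "\<not> ultrametric_on {0,1,2} (isosceles_dist a b)"
proof
  assume "ultrametric_on {0,1,2} (isosceles_dist a b)"
  hence "isosceles_dist a b 0 2 \<le> max (isosceles_dist a b 0 1) (isosceles_dist a b 1 2)"
    unfolding ultrametric_on_def by simp
  with assms show False by (simp add: isosceles_dist_def)
qed

theorem theorem2p15:
  fixes F :: "(real \<Rightarrow> real) set"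
  assumes "\<forall>f\<in>F. nonneg_fn f \<and> increasing_fn f \<and> amenable f"
  shows "(k_separating 2 F \<longrightarrow>
            (\<forall>(X::'a set) d. Metric_space X d \<longrightarrow>
               ((\<forall>f\<in>F. Metric_space X (\<lambda>x y. f (d x y))) \<longleftrightarrow> ultrametric_on X d)))
       \<and> (\<not> k_separating 2 F \<longrightarrow>
            (\<exists>(X::real set) d. Metric_space X d \<and>
               (\<forall>f\<in>F. Metric_space X (\<lambda>x y. f (d x y))) \<and> \<not> ultrametric_on X d))"
proof (intro conjI impI allI)
  fix X :: "'a set" and d
  assume "k_separating 2 F" "Metric_space X d"
  then show "(\<forall>f\<in>F. Metric_space X (\<lambda>x y. f (d x y))) \<longleftrightarrow> ultrametric_on X d"
    using assms ultrametric_on_if_separating Metric_space_comp_ultrametric by blast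
next
  assume "\<not> k_separating 2 F"
  then obtain s u where su: "0 < s" "s < u" "u \<le> 2 * s" "\<forall>f\<in>F. f u \<le> 2 * f s"
    by (rule not_separating_obtains[OF assms]) simp_all
  have "Metric_space {0,1,2} (\<lambda>x y. f (isosceles_dist u s x y))" if f: "f \<in> F" for f
  proof -
    have "f 0 = 0" "0 < f u" "0 < f s"
      using assms f su unfolding amenable_def nonneg_fn_def by (force simp: order_le_less)+
    then show ?thesis using su(4) f by (simp add: comp_isosceles_dist Metric_space_isosceles_dist)
  qed
  moreover have "Metric_space {0,1,2} (isosceles_dist u s)"
    using su by (simp add: Metric_space_isosceles_dist)
  ultimately show "\<exists>(X::real set) d. Metric_space X d \<and>
               (\<forall>f\<in>F. Metric_space X (\<lambda>x y. f (d x y))) \<and> \<not> ultrametric_on X d"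
    using not_ultrametric_on_isosceles_dist[OF su(2)] by blast
qed

end
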